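(* Let $G$ be strongly connected and $C\subseteq V$. For each of the dynamics BD-B, BD-D, DB-B, DB-D and LD defined below, let $F^{(r)}_C$ denote the fixation probability of $C$ under that dynamics with mutant fitness $r$. Then for every $r>1$, $F^{(1)}_C\le F^{(r)}_C$.
   Context: Let $G=(V,E)$ be a finite directed graph with $N=|V|$ vertices and weight matrix $W=[w_{ij}]$, $w_{ij}>0$ iff $(i,j)\in E$, $\sum_j w_{ij}=1$ for all $i$. A configuration is a set of mutants; the fitness of a vertex is $f_k=r$ if it is a mutant and $f_k=1$ otherwise (evaluated in the current configuration). Starting from configuration $C$ at time $0$, each time step applies one of the following update rules (the rule being fixed throughout): BD-B: choose $i$ with probability $f_i/\sum_k f_k$, then $j$ with probability $w_{ij}$; $j$ takes the type of $i$. BD-D: choose $i$ uniformly ($1/N$), then $j$ with probability $w_{ij}f_j^{-1}/\sum_q w_{iq}f_q^{-1}$; $j$ takes the type of $i$. DB-B: choose $j$ uniformly ($1/N$), then $i$ with probability $w_{ij}f_i/\sum_q w_{qj}f_q$; $j$ takes the type of $i$. DB-D: choose $j$ with probability $f_j^{-1}/\sum_k f_k^{-1}$, then $i$ with probability $w_{ij}/\sum_q w_{qj}$; $j$ takes the type of $i$. LD: choose an edge $(i,j)\in E$ with probability $w_{ij}f_i/\sum_{(q,\ell)\in E}w_{q\ell}f_q$; $j$ takes the type of $i$. The fixation probability is the limit as $t\to\infty$ of the probability that all vertices are mutants at time $t$; $r=1$ is neutral drift. *)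

theory Defs
  imports Complex_Main
begin

text \<open>Vertices are the elements of a finite type 'v (so V = UNIV, N = CARD('v)).
  A configuration is the set of mutant vertices.\<close>

datatype rule = BD_B | BD_D | DB_B | DB_D | LD

definition weight_matrix :: "('v::finite \<Rightarrow> 'v \<Rightarrow> real) \<Rightarrow> bool" where
  "weight_matrix W \<longleftrightarrow> (\<forall>i j. 0 \<le> W i j) \<and> (\<forall>i. (\<Sum>j\<in>UNIV. W i j) = 1)"

definition edges :: "('v \<Rightarrow> 'v \<Rightarrow> real) \<Rightarrow> ('v \<times> 'v) set" where
  "edges W = {(i, j). W i j > 0}"

definition strongly_connected :: "('v \<Rightarrow> 'v \<Rightarrow> real) \<Rightarrow> bool" where
  "strongly_connected W \<longleftrightarrow> (\<forall>i j. (i, j) \<in> (edges W)\<^sup>*)"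

definition fit :: "real \<Rightarrow> 'v set \<Rightarrow> 'v \<Rightarrow> real" where
  "fit r C k = (if k \<in> C then r else 1)"

text \<open>Probability that, in configuration C, the (ordered) pair (i,j) is selected,
  i.e. j takes the type of i.\<close>
definition pair_prob :: "rule \<Rightarrow> ('v::finite \<Rightarrow> 'v \<Rightarrow> real) \<Rightarrow> real \<Rightarrow> 'v set \<Rightarrow> 'v \<Rightarrow> 'v \<Rightarrow> real" where
  "pair_prob rl W r C i j = (let f = fit r C; N = real (card (UNIV :: 'v set)) in
     (case rl of
        BD_B \<Rightarrow> f i / (\<Sum>k\<in>UNIV. f k) * W i j
      | BD_D \<Rightarrow> (1 / N) * ((W i j / f j) / (\<Sum>q\<in>UNIV. W i q / f q))
      | DB_B \<Rightarrow> (1 / N) * ((W i j * f i) / (\<Sum>q\<in>UNIV. W q j * f q))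
      | DB_D \<Rightarrow> ((1 / f j) / (\<Sum>k\<in>UNIV. 1 / f k)) * (W i j / (\<Sum>q\<in>UNIV. W q j))
      | LD \<Rightarrow> (W i j * f i) / (\<Sum>(q, l)\<in>edges W. W q l * f q)))"

definition replace :: "'v set \<Rightarrow> 'v \<Rightarrow> 'v \<Rightarrow> 'v set" where
  "replace C i j = (if i \<in> C then insert j C else C - {j})"

definition trans_prob :: "rule \<Rightarrow> ('v::finite \<Rightarrow> 'v \<Rightarrow> real) \<Rightarrow> real \<Rightarrow> 'v set \<Rightarrow> 'v set \<Rightarrow> real" where
  "trans_prob rl W r C D = (\<Sum>(i, j)\<in>UNIV. if replace C i j = D then pair_prob rl W r C i j else 0)"

fun config_dist :: "rule \<Rightarrow> ('v::finite \<Rightarrow> 'v \<Rightarrow> real) \<Rightarrow> real \<Rightarrow> 'v set \<Rightarrow> nat \<Rightarrow> 'v set \<Rightarrow> real" where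
  "config_dist rl W r C 0 D = (if D = C then 1 else 0)"
| "config_dist rl W r C (Suc t) D = (\<Sum>D'\<in>UNIV. config_dist rl W r C t D' * trans_prob rl W r D' D)"

definition fixation_prob :: "rule \<Rightarrow> ('v::finite \<Rightarrow> 'v \<Rightarrow> real) \<Rightarrow> real \<Rightarrow> 'v set \<Rightarrow> real" where
  "fixation_prob rl W r C = lim (\<lambda>t. config_dist rl W r C t UNIV)"

end

theory Submission
  imports Defs "HOL-Analysis.Analysis"
begin

text \<open>Let \<open>p i j\<close> be the neutral (\<open>r = 1\<close>) probability that \<open>i\<close> replaces \<open>j\<close>; it does not depend on
  the configuration. By Brouwer's theorem there is a probability vector \<open>\<pi>\<close> on the vertices with
  \<open>\<Sum>\<^sub>j p i j \<pi> j = \<pi> i \<Sum>\<^sub>j p j i\<close>, and for such \<open>\<pi>\<close> the \<open>\<pi>\<close>-weighted replacement flow across any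
  cut is the same in both directions. Hence the \<open>\<pi>\<close>-mass of the mutant set is a martingale of the
  neutral process, so the neutral fixation probability of \<open>C\<close> is at most \<open>\<pi>(C)\<close>. For \<open>r \<ge> 1\<close>
  every update rule scales, up to a common factor, the events "a mutant replaces a resident" up and
  "a resident replaces a mutant" down, so the \<open>\<pi>\<close>-mass becomes a submartingale. By strong
  connectivity the process is eventually absorbed in \<open>{}\<close> or \<open>V\<close>; hence \<open>\<pi>(C)\<close> is at most the
  limiting probability of not going extinct, which is the fixation probability for fitness \<open>r\<close>.\<close>

section \<open>Multi-step transition probabilities\<close>

fun n_step_prob :: "('s::finite \<Rightarrow> 's \<Rightarrow> real) \<Rightarrow> nat \<Rightarrow> 's \<Rightarrow> 's \<Rightarrow> real" where
  "n_step_prob P 0 x y = of_bool (y = x)"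
| "n_step_prob P (Suc t) x y = (\<Sum>z\<in>UNIV. n_step_prob P t x z * P z y)"

lemma config_dist_eq_n_step_prob:
  "config_dist rl W r C t D = n_step_prob (trans_prob rl W r) t C D"
  by (induction t arbitrary: D) simp_all

lemma n_step_prob_expectation_Suc:
  "(\<Sum>y\<in>UNIV. n_step_prob P (Suc t) x y * g y) =
     (\<Sum>z\<in>UNIV. n_step_prob P t x z * (\<Sum>y\<in>UNIV. P z y * g y))"
  by (simp add: sum_distrib_right sum_distrib_left mult.assoc) (rule sum.swap)

lemma n_step_prob_add:
  "n_step_prob P (s + t) x y = (\<Sum>z\<in>UNIV. n_step_prob P s x z * n_step_prob P t z y)"
proof (induction t arbitrary: y)
  case 0
  then show ?case by (simp add: if_distrib cong: if_cong)
next
  case (Suc t)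
  then show ?case
    by (simp add: sum_distrib_right sum_distrib_left mult.assoc) (rule sum.swap)
qed

locale stochastic_matrix =
  fixes P :: "'s::finite \<Rightarrow> 's \<Rightarrow> real"
  assumes nonneg: "0 \<le> P x y"
    and row_sum: "(\<Sum>y\<in>UNIV. P x y) = 1"
begin

lemma n_step_prob_nonneg: "0 \<le> n_step_prob P t x y"
  by (induction t arbitrary: y) (auto intro!: sum_nonneg mult_nonneg_nonneg nonneg)

lemma n_step_prob_sum: "(\<Sum>y\<in>UNIV. n_step_prob P t x y) = 1"
proof (induction t)
  case (Suc t)
  then show ?case using n_step_prob_expectation_Suc[of P t x "\<lambda>_. 1"] by (simp add: row_sum)
qed simp

lemma n_step_prob_le_1: "n_step_prob P t x y \<le> 1"
  using member_le_sum[of y UNIV "n_step_prob P t x"] n_step_prob_nonneg n_step_prob_sum by simp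

lemma expectation_le_if_superharmonic:
  assumes "\<And>x. (\<Sum>y\<in>UNIV. P x y * g y) \<le> g x"
  shows "(\<Sum>y\<in>UNIV. n_step_prob P t x y * g y) \<le> g x"
proof (induction t)
  case (Suc t)
  have "(\<Sum>y\<in>UNIV. n_step_prob P (Suc t) x y * g y) \<le> (\<Sum>z\<in>UNIV. n_step_prob P t x z * g z)"
    unfolding n_step_prob_expectation_Suc
    by (intro sum_mono mult_left_mono assms n_step_prob_nonneg)
  with Suc show ?case by linarith
qed simp

lemma expectation_ge_if_subharmonic:
  assumes "\<And>x. g x \<le> (\<Sum>y\<in>UNIV. P x y * g y)"
  shows "g x \<le> (\<Sum>y\<in>UNIV. n_step_prob P t x y * g y)"
  using expectation_le_if_superharmonic[of "\<lambda>y. - g y" t x] assms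
  by (simp add: sum_negf)

lemma absorbing_row:
  assumes "P a a = 1"
  shows "P a y = (if y = a then 1 else 0)"
proof -
  have "(\<Sum>y\<in>UNIV - {a}. P a y) = 0"
    using row_sum[of a] assms by (simp add: sum_diff1)
  then have "P a y = 0" if "y \<noteq> a" for y
    using that by (simp add: sum_nonneg_eq_0_iff nonneg)
  with assms show ?thesis by simp
qed

lemma n_step_prob_absorbing:
  assumes "P a a = 1"
  shows "n_step_prob P t a y = of_bool (y = a)"
  by (induction t arbitrary: y) (simp_all add: absorbing_row[OF assms] if_distrib cong: if_cong)

lemma n_step_prob_absorbing_incseq:
  assumes "P a a = 1"
  shows "incseq (\<lambda>t. n_step_prob P t x a)"
proof (rule incseq_SucI)
  fix t
  have "n_step_prob P t x a * P a a \<le> (\<Sum>z\<in>UNIV. n_step_prob P t x z * P z a)"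
    by (rule member_le_sum) (auto intro!: mult_nonneg_nonneg n_step_prob_nonneg nonneg)
  then show "n_step_prob P t x a \<le> n_step_prob P (Suc t) x a"
    using assms by simp
qed

lemma n_step_prob_absorbing_tendsto:
  assumes "P a a = 1"
  shows "(\<lambda>t. n_step_prob P t x a) \<longlonglongrightarrow> (SUP t. n_step_prob P t x a)"
  by (intro LIMSEQ_incseq_SUP n_step_prob_absorbing_incseq[OF assms] bdd_aboveI[where M = 1])
     (auto intro: n_step_prob_le_1)

lemma n_step_prob_reach_absorbing:
  fixes h :: "'s \<Rightarrow> nat"
  assumes "P a a = 1" and "0 \<le> \<delta>" and "\<delta> \<le> 1"
    and descent: "\<And>x. x \<in> S \<Longrightarrow> x \<noteq> a \<Longrightarrow> \<exists>y\<in>S. \<delta> \<le> P x y \<and> h y < h x"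
    and "x \<in> S" and "h x \<le> k"
  shows "\<delta> ^ k \<le> n_step_prob P k x a"
  using \<open>x \<in> S\<close> \<open>h x \<le> k\<close>
proof (induction k arbitrary: x)
  case 0
  then have "x = a" using descent by fastforce
  then show ?case using n_step_prob_absorbing[OF assms(1)] by simp
next
  case (Suc k)
  show ?case
  proof (cases "x = a")
    case True
    with n_step_prob_absorbing[OF assms(1), of "Suc k" a] assms(2,3) show ?thesis
      by (simp add: power_le_one del: n_step_prob.simps power.simps)
  next
    case False
    then obtain y where y: "y \<in> S" "\<delta> \<le> P x y" "h y < h x"
      using descent Suc.prems(1) by blast
    have "\<delta> ^ Suc k \<le> P x y * n_step_prob P k y a"
      using Suc.IH[of y] y Suc.prems(2) assms(2) by (simp add: mult_mono)
    also have "\<dots> \<le> (\<Sum>z\<in>UNIV. P x z * n_step_prob P k z a)"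
      by (rule member_le_sum) (auto intro!: mult_nonneg_nonneg n_step_prob_nonneg nonneg)
    also have "\<dots> = n_step_prob P (Suc k) x a"
      using n_step_prob_add[of P "Suc 0" k x a] by simp
    finally show ?thesis .
  qed
qed

lemma absorbed_mass_step:
  assumes absorbing: "\<And>a. a \<in> A \<Longrightarrow> P a a = 1"
    and reach: "\<And>x. \<delta> \<le> (\<Sum>a\<in>A. n_step_prob P n x a)"
  shows "\<delta> + (1 - \<delta>) * (\<Sum>a\<in>A. n_step_prob P t x a) \<le> (\<Sum>a\<in>A. n_step_prob P (t + n) x a)"
proof -
  have "(\<Sum>a\<in>A. n_step_prob P n z a) = 1" if "z \<in> A" for z
    using that by (simp add: n_step_prob_absorbing[OF absorbing[OF that]])
  then have "(if z \<in> A then 1 else \<delta>) \<le> (\<Sum>a\<in>A. n_step_prob P n z a)" for z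
    using reach by auto
  then have "(\<Sum>z\<in>UNIV. n_step_prob P t x z * (if z \<in> A then 1 else \<delta>))
      \<le> (\<Sum>z\<in>UNIV. n_step_prob P t x z * (\<Sum>a\<in>A. n_step_prob P n z a))"
    by (intro sum_mono mult_left_mono n_step_prob_nonneg)
  also have "\<dots> = (\<Sum>a\<in>A. n_step_prob P (t + n) x a)"
    by (simp add: n_step_prob_add sum_distrib_left) (rule sum.swap)
  also have "(\<Sum>z\<in>UNIV. n_step_prob P t x z * (if z \<in> A then 1 else \<delta>))
      = (\<Sum>z\<in>UNIV. \<delta> * n_step_prob P t x z + (1 - \<delta>) * (of_bool (z \<in> A) * n_step_prob P t x z))"
    by (intro sum.cong) (auto simp: algebra_simps)
  also have "\<dots> = \<delta> + (1 - \<delta>) * (\<Sum>a\<in>A. n_step_prob P t x a)"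
    by (simp add: sum.distrib sum_distrib_left[symmetric] n_step_prob_sum)
  finally show ?thesis .
qed

lemma absorption:
  assumes absorbing: "\<And>a. a \<in> A \<Longrightarrow> P a a = 1"
    and "0 < \<delta>" and reach: "\<And>x. \<delta> \<le> (\<Sum>a\<in>A. n_step_prob P n x a)"
    and "0 < e"
  shows "\<exists>t. 1 - e < (\<Sum>a\<in>A. n_step_prob P t x a)"
proof -
  define s where "s t = (\<Sum>a\<in>A. n_step_prob P t x a)" for t
  have s_le_1: "s t \<le> 1" for t
    using sum_mono2[of UNIV A "n_step_prob P t x"] n_step_prob_nonneg n_step_prob_sum
    by (simp add: s_def)
  have "\<delta> \<le> 1"
    using reach[of x] s_le_1[of n] by (simp add: s_def)
  have "1 - s (m * n) \<le> (1 - \<delta>) ^ m" for m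
  proof (induction m)
    case 0
    show ?case using n_step_prob_nonneg[of 0 x] by (simp add: s_def sum_nonneg)
  next
    case (Suc m)
    have "1 - s (m * n + n) \<le> (1 - \<delta>) * (1 - s (m * n))"
      using absorbed_mass_step[OF absorbing reach, of "m * n" x] by (simp add: s_def algebra_simps)
    also have "\<dots> \<le> (1 - \<delta>) * (1 - \<delta>) ^ m"
      using Suc \<open>\<delta> \<le> 1\<close> by (intro mult_left_mono) auto
    finally show ?case by (simp add: add.commute)
  qed
  moreover obtain m where "(1 - \<delta>) ^ m < e"
    using real_arch_pow_inv[OF \<open>0 < e\<close>, of "1 - \<delta>"] \<open>0 < \<delta>\<close> by auto
  ultimately show ?thesis
    unfolding s_def by (intro exI[of _ "m * n"]) (smt (verit))
qed

end

section \<open>Balanced vectors and cut flows\<close>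

lemma compact_standard_simplex:
  "compact {x::real^'n. (\<forall>i. 0 \<le> x$i) \<and> (\<Sum>i\<in>UNIV. x$i) = 1}" (is "compact ?S")
proof (rule compact_eq_bounded_closed[THEN iffD2, OF conjI])
  show "bounded ?S" unfolding bounded_iff
  proof (intro exI ballI)
    fix x assume "x \<in> ?S"
    then show "norm x \<le> 1"
      using norm_le_l1_cart[of x] by simp
  qed
  show "closed ?S"
    by (intro closed_Collect_conj closed_Collect_all closed_Collect_le closed_Collect_eq)
       (auto intro!: continuous_intros)
qed

definition balanced :: "('v::finite \<Rightarrow> 'v \<Rightarrow> real) \<Rightarrow> ('v \<Rightarrow> real) \<Rightarrow> bool" where
  "balanced p \<pi> \<longleftrightarrow> (\<forall>i. (\<Sum>j\<in>UNIV. p i j * \<pi> j) = \<pi> i * (\<Sum>j\<in>UNIV. p j i))"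

lemma balanced_distribution_exists:
  fixes p :: "'v::finite \<Rightarrow> 'v \<Rightarrow> real"
  assumes nonneg: "\<And>i j. 0 \<le> p i j" and total: "(\<Sum>i\<in>UNIV. \<Sum>j\<in>UNIV. p i j) = 1"
  obtains \<pi> where "\<And>i. 0 \<le> \<pi> i" and "sum \<pi> UNIV = 1" and "balanced p \<pi>"
proof -
  have col_sum: "(\<Sum>j\<in>UNIV. p j i) \<le> 1" for i
  proof -
    have "(\<Sum>j\<in>UNIV. p j i) \<le> (\<Sum>j\<in>UNIV. \<Sum>k\<in>UNIV. p j k)"
      by (intro sum_mono member_le_sum) (auto simp: nonneg)
    then show ?thesis using total by simp
  qed
  define S where "S = {x::real^'v. (\<forall>i. 0 \<le> x$i) \<and> (\<Sum>i\<in>UNIV. x$i) = 1}"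
  \<comment> \<open>The fixed points of \<open>T\<close> are exactly the balanced vectors.\<close>
  define T where "T x = (\<chi> i. (\<Sum>j\<in>UNIV. p i j * x$j) + x$i * (1 - (\<Sum>j\<in>UNIV. p j i)))"
    for x :: "real^'v"
  have "compact S"
    unfolding S_def by (rule compact_standard_simplex)
  moreover have "convex S" unfolding convex_def S_def
    by (auto simp: sum.distrib sum_distrib_left[symmetric])
  moreover have "(\<chi> i. of_bool (i = undefined)) \<in> S" by (simp add: S_def)
  then have "S \<noteq> {}" by blast
  moreover have "continuous_on S T" unfolding T_def by (intro continuous_intros)
  moreover have "T \<in> S \<rightarrow> S"
  proof
    fix x assume x: "x \<in> S"
    have "0 \<le> T x $ i" for i
      using x col_sum[of i] unfolding T_def S_def
      by (auto intro!: add_nonneg_nonneg sum_nonneg mult_nonneg_nonneg nonneg)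
    moreover have "(\<Sum>i\<in>UNIV. T x $ i) = (\<Sum>i\<in>UNIV. x$i)"
      by (simp add: T_def sum.distrib algebra_simps sum_subtractf sum_distrib_left
          sum_distrib_right) (rule sum.swap)
    ultimately show "T x \<in> S" using x by (simp add: S_def)
  qed
  ultimately obtain x where "x \<in> S" "T x = x"
    using brouwer by metis
  then have "(\<Sum>j\<in>UNIV. p i j * x$j) = x$i * (\<Sum>j\<in>UNIV. p j i)" for i
    unfolding T_def by (metis (no_types, lifting) vec_lambda_beta add_diff_cancel_left'
        diff_add_cancel right_diff_distrib mult.right_neutral add.commute)
  with \<open>x \<in> S\<close> show ?thesis
    by (intro that[of "\<lambda>i. x$i"]) (auto simp: S_def balanced_def)
qed

lemma cut_flow_balanced:
  fixes p :: "'v::finite \<Rightarrow> 'v \<Rightarrow> real"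
  assumes "balanced p \<pi>"
  shows "(\<Sum>i\<in>C. \<Sum>j\<in>-C. p i j * \<pi> j) = (\<Sum>i\<in>-C. \<Sum>j\<in>C. p i j * \<pi> j)"
proof -
  have compl: "sum f (- C) = sum f UNIV - sum f C" for f :: "'v \<Rightarrow> real"
    by (simp add: Compl_eq_Diff_UNIV sum_diff)
  have "(\<Sum>i\<in>C. \<Sum>j\<in>-C. p i j * \<pi> j) = (\<Sum>i\<in>C. \<pi> i * (\<Sum>j\<in>UNIV. p j i)) - (\<Sum>i\<in>C. \<Sum>j\<in>C. p i j * \<pi> j)"
    using assms by (simp add: balanced_def compl sum_subtractf)
  also have "\<dots> = (\<Sum>j\<in>C. \<Sum>i\<in>UNIV. p i j * \<pi> j) - (\<Sum>j\<in>C. \<Sum>i\<in>C. p i j * \<pi> j)"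
    by (simp add: sum_distrib_left mult.commute, rule sum.swap)
  also have "\<dots> = (\<Sum>j\<in>C. \<Sum>i\<in>-C. p i j * \<pi> j)"
    by (simp add: compl sum_subtractf)
  also have "\<dots> = (\<Sum>i\<in>-C. \<Sum>j\<in>C. p i j * \<pi> j)"
    by (rule sum.swap)
  finally show ?thesis .
qed

definition biased_towards :: "'v set \<Rightarrow> ('v \<Rightarrow> 'v \<Rightarrow> real) \<Rightarrow> ('v \<Rightarrow> 'v \<Rightarrow> real) \<Rightarrow> bool" where
  "biased_towards C q p \<longleftrightarrow> (\<exists>\<kappa>\<ge>0. \<forall>i j.
     (i \<in> C \<longrightarrow> j \<notin> C \<longrightarrow> \<kappa> * p i j \<le> q i j) \<and> (i \<notin> C \<longrightarrow> j \<in> C \<longrightarrow> q i j \<le> \<kappa> * p i j))"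

lemma biased_towardsI:
  assumes "0 \<le> \<kappa>" and "\<And>i j. 0 \<le> p i j" and "\<And>i j. q i j = \<rho> i j * p i j"
    and "\<And>i j. i \<in> C \<Longrightarrow> j \<notin> C \<Longrightarrow> \<kappa> \<le> \<rho> i j"
    and "\<And>i j. i \<notin> C \<Longrightarrow> j \<in> C \<Longrightarrow> \<rho> i j \<le> \<kappa>"
  shows "biased_towards C q p"
  unfolding biased_towards_def
proof (intro exI[of _ \<kappa>] conjI allI impI)
  fix i j
  show "\<kappa> * p i j \<le> q i j" if "i \<in> C" "j \<notin> C"
    using assms that by (simp add: mult_right_mono)
  show "q i j \<le> \<kappa> * p i j" if "i \<notin> C" "j \<in> C"
    using assms that by (simp add: mult_right_mono)
qed fact

lemma cut_flow_biased:
  fixes p q :: "'v::finite \<Rightarrow> 'v \<Rightarrow> real"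
  assumes balanced: "balanced p \<pi>"
    and "\<And>j. 0 \<le> \<pi> j" and "biased_towards C q p"
  shows "(\<Sum>i\<in>-C. \<Sum>j\<in>C. q i j * \<pi> j) \<le> (\<Sum>i\<in>C. \<Sum>j\<in>-C. q i j * \<pi> j)"
proof -
  obtain \<kappa> where "0 \<le> \<kappa>"
    and out: "\<And>i j. i \<in> C \<Longrightarrow> j \<notin> C \<Longrightarrow> \<kappa> * p i j \<le> q i j"
    and into: "\<And>i j. i \<notin> C \<Longrightarrow> j \<in> C \<Longrightarrow> q i j \<le> \<kappa> * p i j"
    using assms(3) unfolding biased_towards_def by blast
  have "(\<Sum>i\<in>-C. \<Sum>j\<in>C. q i j * \<pi> j) \<le> (\<Sum>i\<in>-C. \<Sum>j\<in>C. \<kappa> * p i j * \<pi> j)"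
    using into assms(2) by (intro sum_mono mult_right_mono) auto
  also have "\<dots> = \<kappa> * (\<Sum>i\<in>C. \<Sum>j\<in>-C. p i j * \<pi> j)"
    by (simp add: cut_flow_balanced[OF balanced] sum_distrib_left mult.assoc)
  also have "\<dots> = (\<Sum>i\<in>C. \<Sum>j\<in>-C. \<kappa> * p i j * \<pi> j)"
    by (simp add: sum_distrib_left mult.assoc)
  also have "\<dots> \<le> (\<Sum>i\<in>C. \<Sum>j\<in>-C. q i j * \<pi> j)"
    using out assms(2) by (intro sum_mono mult_right_mono) auto
  finally show ?thesis .
qed

section \<open>Replacement probabilities\<close>

lemma fit_pos: "0 < r \<Longrightarrow> 0 < fit r C k"
  by (simp add: fit_def)

lemma fit_neutral [simp]: "fit 1 C = (\<lambda>_. 1)"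
  by (auto simp: fit_def)

lemma fit_ge_1: "1 \<le> r \<Longrightarrow> 1 \<le> fit r C k"
  by (simp add: fit_def)

lemma fit_le: "1 \<le> r \<Longrightarrow> fit r C k \<le> r"
  by (simp add: fit_def)

lemma sum_UNIV_prod:
  "(\<Sum>(i, j)\<in>(UNIV :: ('a::finite \<times> 'b::finite) set). g i j) = (\<Sum>i\<in>UNIV. \<Sum>j\<in>UNIV. g i j)"
  by (simp add: sum.cartesian_product UNIV_Times_UNIV[symmetric] del: UNIV_Times_UNIV)

lemma trans_prob_expectation:
  "(\<Sum>D\<in>UNIV. trans_prob rl W r C D * g D) =
     (\<Sum>i\<in>UNIV. \<Sum>j\<in>UNIV. pair_prob rl W r C i j * g (replace C i j))"
proof -
  have "(\<Sum>D\<in>UNIV. trans_prob rl W r C D * g D) =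
      (\<Sum>D\<in>UNIV. \<Sum>i\<in>UNIV. \<Sum>j\<in>UNIV. if replace C i j = D then pair_prob rl W r C i j * g D else 0)"
    by (auto simp: trans_prob_def sum_UNIV_prod sum_distrib_right intro!: sum.cong)
  also have "\<dots> = (\<Sum>i\<in>UNIV. \<Sum>j\<in>UNIV. \<Sum>D\<in>UNIV. if replace C i j = D then pair_prob rl W r C i j * g D else 0)"
    by (subst sum.swap) (rule sum.cong[OF refl], rule sum.swap)
  also have "\<dots> = (\<Sum>i\<in>UNIV. \<Sum>j\<in>UNIV. pair_prob rl W r C i j * g (replace C i j))"
    by simp
  finally show ?thesis .
qed

lemma sum_of_bool_times:
  fixes f :: "'a::finite \<Rightarrow> 'b::finite \<Rightarrow> real"
  shows "(\<Sum>i\<in>UNIV. \<Sum>j\<in>UNIV. of_bool (i \<in> A \<and> j \<in> B) * f i j) = (\<Sum>i\<in>A. \<Sum>j\<in>B. f i j)"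
  by (simp add: of_bool_conj mult.assoc flip: sum_distrib_left)

locale population =
  fixes W :: "'v::finite \<Rightarrow> 'v \<Rightarrow> real"
  assumes weight_matrix: "weight_matrix W"
    and strongly_connected: "strongly_connected W"
begin

lemma W_nonneg: "0 \<le> W i j"
  using weight_matrix by (simp add: weight_matrix_def)

lemma W_row_sum: "(\<Sum>j\<in>UNIV. W i j) = 1"
  using weight_matrix by (simp add: weight_matrix_def)

lemma out_edge_exists: "\<exists>j. 0 < W i j"
  using W_row_sum[of i] W_nonneg by (metis less_eq_real_def sum.neutral zero_neq_one)

lemma in_edge_exists: "\<exists>i. 0 < W i j"
proof -
  obtain k where "0 < W undefined k"
    using out_edge_exists by blast
  moreover have "(k, j) \<in> (edges W)\<^sup>*"
    using strongly_connected by (simp add: strongly_connected_def)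
  ultimately have "(undefined, j) \<in> (edges W)\<^sup>+"
    by (auto simp: edges_def intro: rtrancl_into_trancl2)
  then show ?thesis
    by (auto simp: edges_def elim: tranclE)
qed

lemma row_weighted_sum_pos:
  assumes "\<And>q. 0 < g q" shows "0 < (\<Sum>q\<in>UNIV. W i q * g q)"
proof -
  obtain j where "0 < W i j" using out_edge_exists by blast
  then show ?thesis
    using assms W_nonneg by (intro sum_pos2[of UNIV j]) (auto intro: mult_nonneg_nonneg less_imp_le)
qed

lemma col_weighted_sum_pos:
  assumes "\<And>q. 0 < g q" shows "0 < (\<Sum>q\<in>UNIV. W q j * g q)"
proof -
  obtain i where "0 < W i j" using in_edge_exists by blast
  then show ?thesis
    using assms W_nonneg by (intro sum_pos2[of UNIV i]) (auto intro: mult_nonneg_nonneg less_imp_le)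
qed

lemma edge_weighted_sum: "(\<Sum>(q, l)\<in>edges W. W q l * g q) = (\<Sum>q\<in>UNIV. g q)"
proof -
  have "(\<Sum>(q, l)\<in>edges W. W q l * g q) = (\<Sum>(q, l)\<in>UNIV. W q l * g q)"
    by (rule sum.mono_neutral_left) (auto simp: edges_def W_nonneg less_le)
  also have "\<dots> = (\<Sum>q\<in>UNIV. g q * (\<Sum>l\<in>UNIV. W q l))"
    by (simp add: sum_UNIV_prod sum_distrib_left mult.commute)
  finally show ?thesis by (simp add: W_row_sum)
qed

lemma boundary_edge_exists:
  assumes "D \<noteq> {}" and "D \<noteq> UNIV"
  shows "\<exists>i j. i \<in> D \<and> j \<notin> D \<and> 0 < W i j"
proof -
  obtain i j where "i \<in> D" and "j \<notin> D"
    using assms by blast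
  have "(i, j) \<in> (edges W)\<^sup>*"
    using strongly_connected by (simp add: strongly_connected_def)
  then show ?thesis
    using \<open>i \<in> D\<close> \<open>j \<notin> D\<close> by (induction rule: rtrancl_induct) (auto simp: edges_def)
qed

lemma card_UNIV_pos: "0 < real (card (UNIV :: 'v set))"
  by (simp add: card_gt_0_iff)

lemma fit_sum_pos: "0 < r \<Longrightarrow> 0 < (\<Sum>k\<in>UNIV. fit r C (k :: 'v))"
  by (simp add: sum_pos fit_pos)

lemma inverse_fit_sum_pos: "0 < r \<Longrightarrow> 0 < (\<Sum>k\<in>UNIV. 1 / fit r C (k :: 'v))"
  by (simp add: sum_pos fit_pos)

lemma row_inverse_fit_sum_pos: "0 < r \<Longrightarrow> 0 < (\<Sum>q\<in>UNIV. W i q / fit r C q)"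
  using row_weighted_sum_pos[of "\<lambda>q. 1 / fit r C q" i] by (simp add: fit_pos)

lemma col_fit_sum_pos: "0 < r \<Longrightarrow> 0 < (\<Sum>q\<in>UNIV. W q j * fit r C q)"
  using col_weighted_sum_pos[of "fit r C" j] by (simp add: fit_pos)

lemma col_sum_pos: "0 < (\<Sum>q\<in>UNIV. W q j)"
  using col_weighted_sum_pos[of "\<lambda>_. 1" j] by simp

lemmas pair_prob_denominators_pos = card_UNIV_pos fit_sum_pos inverse_fit_sum_pos
  row_inverse_fit_sum_pos col_fit_sum_pos col_sum_pos

lemma pair_prob_LD_eq_BD_B: "pair_prob LD W r C = pair_prob BD_B W r C"
  by (simp add: pair_prob_def Let_def edge_weighted_sum fun_eq_iff)

lemma pair_prob_pos: "0 < r \<Longrightarrow> 0 < W i j \<Longrightarrow> 0 < pair_prob rl W r C i j"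
  by (cases rl) (auto simp: pair_prob_def Let_def edge_weighted_sum intro!: mult_pos_pos divide_pos_pos
      fit_pos pair_prob_denominators_pos)

lemma pair_prob_nonneg: "0 < r \<Longrightarrow> 0 \<le> pair_prob rl W r C i j"
  using pair_prob_pos[of r i j rl C] W_nonneg[of i j]
  by (cases "W i j = 0") (auto simp: pair_prob_def Let_def split: rule.split)

lemma pair_prob_sum:
  assumes "0 < r"
  shows "(\<Sum>i\<in>UNIV. \<Sum>j\<in>UNIV. pair_prob rl W r C i j) = 1"
proof -
  note pos = fit_sum_pos[OF assms] inverse_fit_sum_pos[OF assms] row_inverse_fit_sum_pos[OF assms]
    col_fit_sum_pos[OF assms] card_UNIV_pos col_sum_pos
  note pos = pos pos[THEN order.strict_implies_not_eq, symmetric]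
  let ?f = "fit r C"
  have swap: "(\<Sum>i\<in>UNIV. \<Sum>j\<in>UNIV. pair_prob rl W r C i j) = (\<Sum>j\<in>UNIV. \<Sum>i\<in>UNIV. pair_prob rl W r C i j)"
    by (rule sum.swap)
  show ?thesis
  proof (cases rl)
    case BD_B
    then show ?thesis using pos
      by (simp add: pair_prob_def Let_def sum_distrib_left[symmetric] W_row_sum sum_divide_distrib[symmetric])
  next
    case BD_D
    have "(\<Sum>j\<in>UNIV. pair_prob rl W r C i j) = 1 / real (card (UNIV :: 'v set))" for i
      unfolding BD_D pair_prob_def Let_def rule.case
      by (simp only: sum_distrib_left[symmetric] sum_divide_distrib[symmetric]) (use pos in simp)
    then show ?thesis using pos by simp
  next
    case DB_B
    then show ?thesis using pos unfolding swap
      by (simp add: pair_prob_def Let_def sum_distrib_left[symmetric] sum_divide_distrib[symmetric])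
  next
    case DB_D
    have "(\<Sum>i\<in>UNIV. pair_prob rl W r C i j) = (1 / ?f j) / (\<Sum>k\<in>UNIV. 1 / ?f k)" for j
      unfolding DB_D pair_prob_def Let_def rule.case
      by (simp only: sum_distrib_left[symmetric] sum_divide_distrib[symmetric]) (use pos in simp)
    then show ?thesis using pos unfolding swap
      by (simp only: sum_divide_distrib[symmetric]) simp
  next
    case LD
    show ?thesis using pos unfolding LD pair_prob_LD_eq_BD_B
      by (simp add: pair_prob_def Let_def sum_distrib_left[symmetric] W_row_sum sum_divide_distrib[symmetric])
  qed
qed

lemma trans_prob_stochastic: "0 < r \<Longrightarrow> stochastic_matrix (trans_prob rl W r)"
proof
  fix C D
  assume "0 < r"
  then show "0 \<le> trans_prob rl W r C D"
    by (auto simp: trans_prob_def intro!: sum_nonneg pair_prob_nonneg)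
  show "(\<Sum>D\<in>UNIV. trans_prob rl W r C D) = 1"
    using trans_prob_expectation[of rl W r C "\<lambda>_. 1"] pair_prob_sum[OF \<open>0 < r\<close>] by simp
qed

lemma trans_prob_ge_pair_prob:
  assumes "0 < r"
  shows "pair_prob rl W r C i j \<le> trans_prob rl W r C (replace C i j)"
proof -
  have "pair_prob rl W r C i j = (case (i, j) of (i', j') \<Rightarrow>
      if replace C i' j' = replace C i j then pair_prob rl W r C i' j' else 0)"
    by simp
  also have "\<dots> \<le> trans_prob rl W r C (replace C i j)"
    unfolding trans_prob_def
    by (rule member_le_sum) (auto simp: pair_prob_nonneg[OF assms] split: if_split_asm)
  finally show ?thesis .
qed

lemma trans_prob_stays:
  assumes "0 < r" and "\<And>i j. replace A i j = A"
  shows "trans_prob rl W r A A = 1"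
  using pair_prob_sum[OF assms(1)] by (simp add: trans_prob_def assms(2) sum_UNIV_prod)

lemma sum_replace:
  fixes \<pi> :: "'v \<Rightarrow> real"
  shows "sum \<pi> (replace C i j) =
     sum \<pi> C + of_bool (i \<in> C \<and> j \<notin> C) * \<pi> j - of_bool (i \<notin> C \<and> j \<in> C) * \<pi> j"
  by (auto simp: replace_def insert_absorb sum_diff1)

lemma expected_sum_after_step:
  fixes \<pi> :: "'v \<Rightarrow> real"
  assumes "0 < r"
  shows "(\<Sum>D\<in>UNIV. trans_prob rl W r C D * sum \<pi> D) =
    sum \<pi> C + (\<Sum>i\<in>C. \<Sum>j\<in>-C. pair_prob rl W r C i j * \<pi> j)
      - (\<Sum>i\<in>-C. \<Sum>j\<in>C. pair_prob rl W r C i j * \<pi> j)"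
proof -
  let ?p = "pair_prob rl W r C"
  have "(\<Sum>D\<in>UNIV. trans_prob rl W r C D * sum \<pi> D) =
      (\<Sum>i\<in>UNIV. \<Sum>j\<in>UNIV. ?p i j * sum \<pi> C
        + of_bool (i \<in> C \<and> j \<in> -C) * (?p i j * \<pi> j) - of_bool (i \<in> -C \<and> j \<in> C) * (?p i j * \<pi> j))"
    unfolding trans_prob_expectation sum_replace by (simp add: algebra_simps)
  also have "\<dots> = sum \<pi> C * (\<Sum>i\<in>UNIV. \<Sum>j\<in>UNIV. ?p i j) + (\<Sum>i\<in>C. \<Sum>j\<in>-C. ?p i j * \<pi> j)
      - (\<Sum>i\<in>-C. \<Sum>j\<in>C. ?p i j * \<pi> j)"
    by (simp only: sum_subtractf sum.distrib sum_of_bool_times sum_distrib_left mult.commute)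
  finally show ?thesis
    using pair_prob_sum[OF assms] by simp
qed


section \<open>Advantageous mutants bias the replacement probabilities\<close>

lemma pair_prob_neutral: "pair_prob rl W 1 C = pair_prob rl W 1 {}"
  by (simp add: pair_prob_def fun_eq_iff)

lemma row_inverse_fit_sum_le:
  assumes "1 \<le> r" shows "(\<Sum>q\<in>UNIV. W i q / fit r C q) \<le> 1"
proof -
  have "W i q / fit r C q \<le> W i q / 1" for q
    using assms by (intro divide_left_mono fit_ge_1 W_nonneg) (auto simp: fit_def)
  then have "(\<Sum>q\<in>UNIV. W i q / fit r C q) \<le> (\<Sum>q\<in>UNIV. W i q)"
    by (intro sum_mono) simp
  then show ?thesis by (simp add: W_row_sum)
qed

lemma row_inverse_fit_sum_ge:
  assumes "1 \<le> r" shows "1 \<le> r * (\<Sum>q\<in>UNIV. W i q / fit r C q)"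
proof -
  have "W i q / r \<le> W i q / fit r C q" for q
    using assms fit_pos[of r C q] by (intro divide_left_mono fit_le W_nonneg) auto
  then have "W i q \<le> r * (W i q / fit r C q)" for q
    using assms by (simp add: divide_le_eq mult.commute)
  then have "(\<Sum>q\<in>UNIV. W i q) \<le> (\<Sum>q\<in>UNIV. r * (W i q / fit r C q))"
    by (rule sum_mono)
  then show ?thesis by (simp add: W_row_sum sum_distrib_left)
qed

lemma col_fit_sum_le: "1 \<le> r \<Longrightarrow> (\<Sum>q\<in>UNIV. W q j * fit r C q) \<le> r * (\<Sum>q\<in>UNIV. W q j)"
  unfolding sum_distrib_left
  by (intro sum_mono) (metis W_nonneg fit_le mult.commute mult_left_mono)

lemma col_fit_sum_ge: "1 \<le> r \<Longrightarrow> (\<Sum>q\<in>UNIV. W q j) \<le> (\<Sum>q\<in>UNIV. W q j * fit r C q)"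
  by (intro sum_mono) (metis W_nonneg fit_ge_1 mult_left_mono mult.right_neutral)

lemma BD_B_biased:
  assumes "1 \<le> r"
  shows "biased_towards C (pair_prob BD_B W r C) (pair_prob BD_B W 1 C)"
proof -
  let ?N = "real (card (UNIV :: 'v set))" and ?F = "\<Sum>k\<in>UNIV. fit r C k"
  have "0 < ?F" using assms fit_sum_pos by simp
  show ?thesis
  proof (rule biased_towardsI[where \<kappa> = "?N / ?F" and \<rho> = "\<lambda>i j. ?N * fit r C i / ?F"])
    fix i j
    show "pair_prob BD_B W r C i j = ?N * fit r C i / ?F * pair_prob BD_B W 1 C i j"
      using card_UNIV_pos by (simp add: pair_prob_def Let_def)
    show "?N / ?F \<le> ?N * fit r C i / ?F" if "i \<in> C"
      using that assms \<open>0 < ?F\<close> card_UNIV_pos by (simp add: fit_def divide_right_mono)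
    show "?N * fit r C i / ?F \<le> ?N / ?F" if "i \<notin> C"
      using that by (simp add: fit_def)
  qed (use \<open>0 < ?F\<close> pair_prob_nonneg in auto)
qed

lemma BD_D_biased:
  assumes "1 \<le> r"
  shows "biased_towards C (pair_prob BD_D W r C) (pair_prob BD_D W 1 C)"
proof (rule biased_towardsI[where \<kappa> = 1 and \<rho> = "\<lambda>i j. 1 / (fit r C j * (\<Sum>q\<in>UNIV. W i q / fit r C q))"])
  fix i j
  show "pair_prob BD_D W r C i j =
      1 / (fit r C j * (\<Sum>q\<in>UNIV. W i q / fit r C q)) * pair_prob BD_D W 1 C i j"
    by (simp add: pair_prob_def Let_def W_row_sum)
  have S: "0 < (\<Sum>q\<in>UNIV. W i q / fit r C q)"
    using assms row_inverse_fit_sum_pos by simp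
  show "1 \<le> 1 / (fit r C j * (\<Sum>q\<in>UNIV. W i q / fit r C q))" if "j \<notin> C"
    using that S row_inverse_fit_sum_le[OF assms, of i C] by (simp add: fit_def)
  show "1 / (fit r C j * (\<Sum>q\<in>UNIV. W i q / fit r C q)) \<le> 1" if "j \<in> C"
    using that S row_inverse_fit_sum_ge[OF assms, of i C] by (simp add: fit_def)
qed (use pair_prob_nonneg in auto)

lemma DB_B_biased:
  assumes "1 \<le> r"
  shows "biased_towards C (pair_prob DB_B W r C) (pair_prob DB_B W 1 C)"
proof (rule biased_towardsI[where \<kappa> = 1 and \<rho> = "\<lambda>i j. fit r C i * (\<Sum>q\<in>UNIV. W q j) / (\<Sum>q\<in>UNIV. W q j * fit r C q)"])
  fix i j
  have c: "0 < (\<Sum>q\<in>UNIV. W q j)" by (rule col_sum_pos)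
  have T: "0 < (\<Sum>q\<in>UNIV. W q j * fit r C q)"
    using assms col_fit_sum_pos by simp
  show "pair_prob DB_B W r C i j =
      fit r C i * (\<Sum>q\<in>UNIV. W q j) / (\<Sum>q\<in>UNIV. W q j * fit r C q) * pair_prob DB_B W 1 C i j"
    using c by (simp add: pair_prob_def Let_def ac_simps)
  show "1 \<le> fit r C i * (\<Sum>q\<in>UNIV. W q j) / (\<Sum>q\<in>UNIV. W q j * fit r C q)" if "i \<in> C"
    using that T col_fit_sum_le[OF assms, of j C] by (simp add: fit_def mult.commute)
  show "fit r C i * (\<Sum>q\<in>UNIV. W q j) / (\<Sum>q\<in>UNIV. W q j * fit r C q) \<le> 1" if "i \<notin> C"
    using that T col_fit_sum_ge[OF assms, of j C] by (simp add: fit_def)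
qed (use pair_prob_nonneg in auto)

lemma DB_D_biased:
  assumes "1 \<le> r"
  shows "biased_towards C (pair_prob DB_D W r C) (pair_prob DB_D W 1 C)"
proof -
  let ?N = "real (card (UNIV :: 'v set))" and ?Z = "\<Sum>k\<in>UNIV. 1 / fit r C k"
  have "0 < ?Z" using assms inverse_fit_sum_pos by simp
  show ?thesis
  proof (rule biased_towardsI[where \<kappa> = "?N / (r * ?Z)" and \<rho> = "\<lambda>i j. ?N / (fit r C j * ?Z)"])
    fix i j
    show "pair_prob DB_D W r C i j = ?N / (fit r C j * ?Z) * pair_prob DB_D W 1 C i j"
      using card_UNIV_pos by (simp add: pair_prob_def Let_def)
    show "?N / (r * ?Z) \<le> ?N / (fit r C j * ?Z)" if "j \<notin> C"
      using that assms \<open>0 < ?Z\<close> card_UNIV_pos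
      by (simp add: fit_def divide_left_mono mult_le_cancel_right1)
    show "?N / (fit r C j * ?Z) \<le> ?N / (r * ?Z)" if "j \<in> C"
      using that by (simp add: fit_def)
  qed (use \<open>0 < ?Z\<close> assms card_UNIV_pos pair_prob_nonneg in auto)
qed

lemma pair_prob_biased:
  "1 \<le> r \<Longrightarrow> biased_towards C (pair_prob rl W r C) (pair_prob rl W 1 C)"
  using BD_B_biased BD_D_biased DB_B_biased DB_D_biased
  by (cases rl) (simp_all add: pair_prob_LD_eq_BD_B)

lemma expected_mass_neutral:
  assumes "balanced (pair_prob rl W 1 {}) \<pi>"
  shows "(\<Sum>D'\<in>UNIV. trans_prob rl W 1 D D' * sum \<pi> D') = sum \<pi> D"
  using expected_sum_after_step[of 1 rl D \<pi>] cut_flow_balanced[OF assms, of D]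
  by (simp add: pair_prob_neutral[of rl D])

lemma expected_mass_ge:
  assumes "1 \<le> r" and "balanced (pair_prob rl W 1 {}) \<pi>" and "\<And>i. 0 \<le> \<pi> i"
  shows "sum \<pi> D \<le> (\<Sum>D'\<in>UNIV. trans_prob rl W r D D' * sum \<pi> D')"
  using expected_sum_after_step[of r rl D \<pi>] assms(1,2)
    cut_flow_biased[OF _ assms(3) pair_prob_biased[OF assms(1)]]
  by (simp add: pair_prob_neutral[of rl D])


section \<open>Absorption and fixation\<close>

lemma pair_prob_uniform_lower_bound:
  assumes "0 < r"
  shows "\<exists>\<delta>>0. \<forall>D i j. 0 < W i j \<longrightarrow> \<delta> \<le> pair_prob rl W r D i j"
proof -
  define S where "S = (\<lambda>(D, i, j). pair_prob rl W r D i j) ` {(D, i, j). 0 < W i j}"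
  have "finite S"
    unfolding S_def by (rule finite_imageI) simp
  obtain j where "0 < W undefined j"
    using out_edge_exists by blast
  then have "pair_prob rl W r {} undefined j \<in> S"
    unfolding S_def by (intro image_eqI[of _ _ "({}, undefined, j)"]) auto
  then have "S \<noteq> {}" by blast
  moreover have "\<forall>x\<in>S. 0 < x"
    unfolding S_def using pair_prob_pos[OF assms] by auto
  ultimately have "0 < Min S"
    using Min_gr_iff[OF \<open>finite S\<close>] by blast
  moreover have "Min S \<le> pair_prob rl W r D i j" if "0 < W i j" for D i j
  proof (rule Min_le[OF \<open>finite S\<close>])
    show "pair_prob rl W r D i j \<in> S"
      unfolding S_def using that by (intro image_eqI[of _ _ "(D, i, j)"]) auto
  qed
  ultimately show ?thesis by blast
qed

lemma fixation_prob_eq_SUP: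
  assumes "0 < r"
  shows "fixation_prob rl W r C = (SUP t. config_dist rl W r C t UNIV)"
proof -
  interpret stochastic_matrix "trans_prob rl W r"
    by (rule trans_prob_stochastic[OF assms])
  have "trans_prob rl W r UNIV UNIV = 1"
    by (rule trans_prob_stays[OF assms]) (simp add: replace_def)
  then show ?thesis
    unfolding fixation_prob_def config_dist_eq_n_step_prob
    by (rule limI[OF n_step_prob_absorbing_tendsto])
qed

lemma fixation_reachable:
  assumes "0 < r"
  obtains \<delta> where "0 < \<delta>"
    and "\<And>D. D \<noteq> {} \<Longrightarrow> \<delta> \<le> n_step_prob (trans_prob rl W r) (card (UNIV :: 'v set)) D UNIV"
proof -
  interpret stochastic_matrix "trans_prob rl W r"
    by (rule trans_prob_stochastic[OF assms])
  obtain \<delta> where "0 < \<delta>" and \<delta>: "\<And>D i j. 0 < W i j \<Longrightarrow> \<delta> \<le> pair_prob rl W r D i j"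
    using pair_prob_uniform_lower_bound[OF assms] by blast
  let ?\<delta> = "min \<delta> 1"
  have descent: "\<exists>D'\<in>{D. D \<noteq> {}}. ?\<delta> \<le> trans_prob rl W r D D' \<and> card (- D') < card (- D)"
    if "D \<in> {D. D \<noteq> {}}" and "D \<noteq> UNIV" for D
  proof -
    obtain i j where "i \<in> D" "j \<notin> D" "0 < W i j"
      using boundary_edge_exists \<open>D \<in> {D. D \<noteq> {}}\<close> \<open>D \<noteq> UNIV\<close> by blast
    have "?\<delta> \<le> trans_prob rl W r D (replace D i j)"
      using \<delta>[OF \<open>0 < W i j\<close>, of D] trans_prob_ge_pair_prob[OF assms, of rl D i j] by linarith
    moreover have "replace D i j = insert j D"
      using \<open>i \<in> D\<close> by (simp add: replace_def)
    moreover have "card (- insert j D) < card (- D)"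
      using \<open>j \<notin> D\<close> by (intro psubset_card_mono) auto
    ultimately show ?thesis by auto
  qed
  have "trans_prob rl W r UNIV UNIV = 1"
    by (rule trans_prob_stays[OF assms]) (simp add: replace_def)
  then have "?\<delta> ^ card (UNIV :: 'v set) \<le> n_step_prob (trans_prob rl W r) (card (UNIV :: 'v set)) D UNIV"
    if "D \<noteq> {}" for D
    by (rule n_step_prob_reach_absorbing[where S = "{D. D \<noteq> {}}" and h = "\<lambda>D. card (- D)"])
      (use \<open>0 < \<delta>\<close> descent that in \<open>auto simp: card_mono\<close>)
  moreover have "0 < ?\<delta> ^ card (UNIV :: 'v set)"
    using \<open>0 < \<delta>\<close> by simp
  ultimately show ?thesis
    using that by blast
qed

lemma extinction_or_fixation:
  assumes "0 < r" and "0 < e"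
  shows "\<exists>t. 1 - e < config_dist rl W r C t {} + config_dist rl W r C t UNIV"
proof -
  interpret stochastic_matrix "trans_prob rl W r"
    by (rule trans_prob_stochastic[OF assms(1)])
  let ?P = "trans_prob rl W r" and ?n = "card (UNIV :: 'v set)"
  obtain \<delta> where "0 < \<delta>" and reach_UNIV: "\<And>D. D \<noteq> {} \<Longrightarrow> \<delta> \<le> n_step_prob ?P ?n D UNIV"
    using fixation_reachable[OF assms(1)] by blast
  have absorbing: "?P {} {} = 1" "?P UNIV UNIV = 1"
    by (rule trans_prob_stays[OF assms(1)], simp add: replace_def)+
  have "\<delta> \<le> 1"
    using reach_UNIV[of UNIV] n_step_prob_le_1[of ?n UNIV UNIV] by simp
  have reach: "\<delta> \<le> (\<Sum>A\<in>{{}, UNIV}. n_step_prob ?P ?n D A)" for D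
    using \<open>\<delta> \<le> 1\<close> reach_UNIV[of D] n_step_prob_nonneg[of ?n D]
    by (cases "D = {}") (simp_all add: n_step_prob_absorbing[OF absorbing(1)] add_increasing)
  obtain t where "1 - e < (\<Sum>A\<in>{{}, UNIV}. n_step_prob ?P t C A)"
    using absorption[of "{{}, UNIV}" \<delta> ?n e C] absorbing reach \<open>0 < e\<close> \<open>0 < \<delta>\<close> by auto
  then show ?thesis
    by (auto simp: config_dist_eq_n_step_prob)
qed

lemma fixation_prob_neutral_le:
  assumes "balanced (pair_prob rl W 1 {}) \<pi>" and "\<And>i. 0 \<le> \<pi> i" and "sum \<pi> UNIV = 1"
  shows "fixation_prob rl W 1 C \<le> sum \<pi> C"
proof -
  interpret stochastic_matrix "trans_prob rl W 1"
    by (rule trans_prob_stochastic) simp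
  have "config_dist rl W 1 C t UNIV \<le> sum \<pi> C" for t
  proof -
    have "n_step_prob (trans_prob rl W 1) t C UNIV * sum \<pi> UNIV
        \<le> (\<Sum>D\<in>UNIV. n_step_prob (trans_prob rl W 1) t C D * sum \<pi> D)"
      by (rule member_le_sum) (auto intro!: mult_nonneg_nonneg n_step_prob_nonneg sum_nonneg assms(2))
    also have "\<dots> \<le> sum \<pi> C"
      by (rule expectation_le_if_superharmonic) (simp add: expected_mass_neutral[OF assms(1)])
    finally show ?thesis
      using assms(3) by (simp add: config_dist_eq_n_step_prob)
  qed
  then show ?thesis
    by (simp add: fixation_prob_eq_SUP cSUP_least)
qed

lemma fixation_prob_ge:
  assumes "1 \<le> r"
    and "balanced (pair_prob rl W 1 {}) \<pi>" and "\<And>i. 0 \<le> \<pi> i" and "sum \<pi> UNIV = 1"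
  shows "sum \<pi> C \<le> fixation_prob rl W r C"
proof (rule field_le_epsilon)
  fix e :: real
  assume "0 < e"
  have "0 < r" using assms(1) by simp
  interpret stochastic_matrix "trans_prob rl W r"
    by (rule trans_prob_stochastic[OF \<open>0 < r\<close>])
  let ?d = "\<lambda>t D. n_step_prob (trans_prob rl W r) t C D"
  have mass_le: "sum \<pi> D \<le> of_bool (D \<noteq> {})" for D
    using sum_mono2[of UNIV D \<pi>] assms(3,4) by auto
  obtain t where t: "1 - e < ?d t {} + ?d t UNIV"
    using extinction_or_fixation[OF \<open>0 < r\<close> \<open>0 < e\<close>, of rl C]
    by (auto simp: config_dist_eq_n_step_prob)
  have "sum \<pi> C \<le> (\<Sum>D\<in>UNIV. ?d t D * sum \<pi> D)"
    by (rule expectation_ge_if_subharmonic) (rule expected_mass_ge[OF assms(1-3)])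
  also have "\<dots> \<le> (\<Sum>D\<in>UNIV. ?d t D * of_bool (D \<noteq> {}))"
    by (intro sum_mono mult_left_mono mass_le n_step_prob_nonneg)
  also have "\<dots> = 1 - ?d t {}"
    using n_step_prob_sum[of t C] sum.remove[of UNIV "{}" "?d t"]
    by (simp add: Collect_neg_eq Compl_eq_Diff_UNIV)
  also have "\<dots> \<le> ?d t UNIV + e"
    using t by simp
  also have "?d t UNIV \<le> fixation_prob rl W r C"
    unfolding fixation_prob_eq_SUP[OF \<open>0 < r\<close>] config_dist_eq_n_step_prob
    by (rule cSUP_upper) (auto intro!: bdd_aboveI[where M = 1] n_step_prob_le_1)
  finally show "sum \<pi> C \<le> fixation_prob rl W r C + e"
    by simp
qed

end

theorem theorem5:
  fixes W :: "'v::finite \<Rightarrow> 'v \<Rightarrow> real" and C :: "'v set" and r :: real and rl :: rule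
  assumes "weight_matrix W"
    and "strongly_connected W"
    and "r > 1"
  shows "fixation_prob rl W 1 C \<le> fixation_prob rl W r C"
proof -
  interpret population W
    using assms(1,2) by unfold_locales
  obtain \<pi> where "\<And>i. 0 \<le> \<pi> i" and "sum \<pi> UNIV = 1" and "balanced (pair_prob rl W 1 {}) \<pi>"
    using balanced_distribution_exists[of "pair_prob rl W 1 {}"] pair_prob_nonneg pair_prob_sum
    by (metis zero_less_one)
  then have "fixation_prob rl W 1 C \<le> sum \<pi> C" and "sum \<pi> C \<le> fixation_prob rl W r C"
    using fixation_prob_neutral_le fixation_prob_ge assms(3) by simp_all
  then show ?thesis
    by linarith
qed

end
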